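(* Let $a>0$ and let $\theta_0,\theta_1,\theta_2\in\mathbb{R}$ be distinct. In the $(t,x)$-plane consider the points $P_i=\left(\theta_i,\tfrac12 a\theta_i^2\right)$, $i=0,1,2$, on the parabola $x=\tfrac12 at^2$. For $c>0$ equip the plane with the Minkowski inner product $u\cdot v=-c^2u_tv_t+u_xv_x$ associated to the metric $ds^2=-c^2dt^2+dx^2$. Then for all sufficiently large $c$ the chords $P_0P_1$ and $P_0P_2$ are timelike, and their pseudo-angle $\theta(c)\ge0$, defined by $\cosh^2(\theta(c))=\frac{(u\cdot v)^2}{(u\cdot u)(v\cdot v)}$ with $u=P_1-P_0$, $v=P_2-P_0$, satisfies $\cosh^2(\theta(c))\to1$ and $$\theta(c)^2\sim\frac{a^2}{4c^2}(\theta_1-\theta_2)^2\quad\text{as } c\to\infty,$$ an asymptotic which does not depend on $\theta_0$.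
   Context: A vector $u$ is timelike if $u\cdot u<0$. This parabola is the $c\to\infty$ limit of the hyperbolae $x=\frac{c^2}{a}(\cosh(a\theta/c)-1)$, $t=\frac{c}{a}\sinh(a\theta/c)$ (worldlines of constant proper acceleration $a$). *)

theory Defs
  imports "HOL-Analysis.Analysis" "HOL-Library.Landau_Symbols"
begin

definition mink :: "real \<Rightarrow> real \<times> real \<Rightarrow> real \<times> real \<Rightarrow> real" where
  "mink c u v = - (c^2) * fst u * fst v + snd u * snd v"

definition timelike :: "real \<Rightarrow> real \<times> real \<Rightarrow> bool" where
  "timelike c u \<longleftrightarrow> mink c u u < 0"

definition cosh_sq_ratio :: "real \<Rightarrow> real \<times> real \<Rightarrow> real \<times> real \<Rightarrow> real" where
  "cosh_sq_ratio c u v = (mink c u v)^2 / (mink c u u * mink c v v)"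

definition pseudo_angle :: "real \<Rightarrow> real \<times> real \<Rightarrow> real \<times> real \<Rightarrow> real" where
  "pseudo_angle c u v = arcosh (sqrt (cosh_sq_ratio c u v))"

definition parab_pt :: "real \<Rightarrow> real \<Rightarrow> real \<times> real" where
  "parab_pt a \<theta> = (\<theta>, a * \<theta>^2 / 2)"

end

theory Submission
  imports Defs "HOL-Real_Asymp.Real_Asymp"
begin

text \<open>The chord from \<open>\<theta>\<close> to \<open>\<theta>'\<close> of the parabola \<open>x = a t\<^sup>2/2\<close> is parallel to \<open>(1, p)\<close>
  with \<open>p = a (\<theta> + \<theta>')/2\<close>, its mean velocity. For \<open>\<bar>p\<bar> < c\<close> this direction is that of the unit
  timelike vector \<open>(cosh \<alpha>, c sinh \<alpha>)\<close> of rapidity \<open>\<alpha> = artanh (p/c)\<close>, and the addition formula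
  for \<open>cosh\<close> shows that the pseudo-angle between two such directions is the difference of their
  rapidities. Hence \<open>\<theta>(c) = \<bar>artanh (p\<^sub>1/c) - artanh (p\<^sub>2/c)\<bar> \<approx> \<bar>p\<^sub>1 - p\<^sub>2\<bar>/c = a \<bar>\<theta>\<^sub>1 - \<theta>\<^sub>2\<bar>/(2c)\<close>,
  in which \<open>\<theta>\<^sub>0\<close> cancels.\<close>

lemma tanh_artanh_real:
  fixes x :: real
  assumes "\<bar>x\<bar> < 1"
  shows "tanh (artanh x) = x"
proof -
  define z where "z = (1 + x) / (1 - x)"
  have z_pos: "z > 0"
    using assms by (simp add: z_def)
  have "artanh x = ln (sqrt z)"
    using z_pos by (simp add: artanh_def z_def ln_sqrt)
  then have "tanh (artanh x) = (z - 1) / (z + 1)"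
    using z_pos by (simp add: tanh_ln_real)
  also have "\<dots> = x"
    using assms by (simp add: z_def field_simps)
  finally show ?thesis .
qed

lemma mink_scaleR: "mink c (s *\<^sub>R u) (r *\<^sub>R v) = s * r * mink c u v"
  by (simp add: mink_def algebra_simps)

lemma timelike_scaleR:
  assumes "s \<noteq> 0"
  shows "timelike c (s *\<^sub>R u) \<longleftrightarrow> timelike c u"
proof -
  have "s * s > 0"
    using assms by (metis not_real_square_gt_zero)
  then show ?thesis
    by (simp add: timelike_def mink_scaleR mult_less_0_iff)
qed

lemma cosh_sq_ratio_scaleR:
  assumes "s \<noteq> 0" "r \<noteq> 0"
  shows "cosh_sq_ratio c (s *\<^sub>R u) (r *\<^sub>R v) = cosh_sq_ratio c u v"
proof -
  have "mink c (s *\<^sub>R u) (s *\<^sub>R u) * mink c (r *\<^sub>R v) (r *\<^sub>R v)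
      = (s * r)^2 * (mink c u u * mink c v v)"
    by (simp add: mink_scaleR power2_eq_square ac_simps)
  moreover have "(mink c (s *\<^sub>R u) (r *\<^sub>R v))^2 = (s * r)^2 * (mink c u v)^2"
    by (simp add: mink_scaleR power_mult_distrib)
  ultimately show ?thesis
    using assms by (simp add: cosh_sq_ratio_def)
qed

lemma pseudo_angle_scaleR:
  assumes "s \<noteq> 0" "r \<noteq> 0"
  shows "pseudo_angle c (s *\<^sub>R u) (r *\<^sub>R v) = pseudo_angle c u v"
  using assms by (simp add: pseudo_angle_def cosh_sq_ratio_scaleR)

lemma timelike_velocity: "timelike c (1, p) \<longleftrightarrow> \<bar>p\<bar> < \<bar>c\<bar>"
  by (simp add: timelike_def mink_def abs_le_square_iff flip: power2_eq_square not_le)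

lemma mink_rapidity:
  "mink c (cosh \<alpha>, c * sinh \<alpha>) (cosh \<beta>, c * sinh \<beta>) = - (c^2 * cosh (\<alpha> - \<beta>))"
  by (simp add: mink_def cosh_diff power2_eq_square algebra_simps)

lemma cosh_sq_ratio_rapidity:
  assumes "c \<noteq> 0"
  shows "cosh_sq_ratio c (cosh \<alpha>, c * sinh \<alpha>) (cosh \<beta>, c * sinh \<beta>) = cosh (\<alpha> - \<beta>)^2"
  using assms by (simp add: cosh_sq_ratio_def mink_rapidity power_mult_distrib)

lemma velocity_eq_scaleR_rapidity:
  assumes "\<bar>p\<bar> < c"
  defines "\<alpha> \<equiv> artanh (p / c)"
  shows "(1, p) = inverse (cosh \<alpha>) *\<^sub>R (cosh \<alpha>, c * sinh \<alpha>)"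
proof -
  have "\<bar>p / c\<bar> < 1"
    using assms by (simp add: abs_divide)
  then have "sinh \<alpha> / cosh \<alpha> = p / c"
    by (simp add: \<alpha>_def tanh_artanh_real flip: tanh_def)
  then show ?thesis
    using assms(1) by (simp add: field_simps)
qed

lemma cosh_sq_ratio_velocity:
  assumes "\<bar>p\<bar> < c" "\<bar>q\<bar> < c"
  shows "cosh_sq_ratio c (1, p) (1, q) = cosh (artanh (p / c) - artanh (q / c))^2"
proof -
  define \<alpha> \<beta> where "\<alpha> = artanh (p / c)" and "\<beta> = artanh (q / c)"
  have p: "(1, p) = inverse (cosh \<alpha>) *\<^sub>R (cosh \<alpha>, c * sinh \<alpha>)"
    unfolding \<alpha>_def using assms(1) by (rule velocity_eq_scaleR_rapidity)
  have q: "(1, q) = inverse (cosh \<beta>) *\<^sub>R (cosh \<beta>, c * sinh \<beta>)"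
    unfolding \<beta>_def using assms(2) by (rule velocity_eq_scaleR_rapidity)
  have "cosh_sq_ratio c (1, p) (1, q) =
      cosh_sq_ratio c (cosh \<alpha>, c * sinh \<alpha>) (cosh \<beta>, c * sinh \<beta>)"
    unfolding p q by (rule cosh_sq_ratio_scaleR) simp_all
  also have "\<dots> = cosh (\<alpha> - \<beta>)^2"
    using assms by (intro cosh_sq_ratio_rapidity) linarith
  finally show ?thesis
    by (simp add: \<alpha>_def \<beta>_def)
qed

lemma pseudo_angle_velocity:
  assumes "\<bar>p\<bar> < c" "\<bar>q\<bar> < c"
  shows "pseudo_angle c (1, p) (1, q) = \<bar>artanh (p / c) - artanh (q / c)\<bar>"
proof -
  have "sqrt (cosh_sq_ratio c (1, p) (1, q)) = cosh \<bar>artanh (p / c) - artanh (q / c)\<bar>"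
    using assms cosh_real_pos by (simp add: cosh_sq_ratio_velocity less_imp_le)
  then show ?thesis
    by (simp add: pseudo_angle_def arcosh_cosh_real del: cosh_real_abs)
qed

lemma parab_pt_diff:
  "parab_pt a \<theta>' - parab_pt a \<theta> = (\<theta>' - \<theta>) *\<^sub>R (1, a * (\<theta> + \<theta>') / 2)"
  by (simp add: parab_pt_def power2_eq_square algebra_simps)

lemma rapidity_diff_tendsto_0:
  "((\<lambda>c::real. artanh (p / c) - artanh (q / c)) \<longlongrightarrow> 0) at_top"
  by real_asymp

lemma rapidity_diff_sq_asymp_equiv:
  fixes p q :: real
  assumes "p \<noteq> q"
  shows "(\<lambda>c. (artanh (p / c) - artanh (q / c))^2) \<sim>[at_top] (\<lambda>c. (p - q)^2 / c^2)"
  using assms by real_asymp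

theorem mainTheorem4:
  fixes a \<theta>0 \<theta>1 \<theta>2 :: real
  assumes "a > 0"
    and "\<theta>0 \<noteq> \<theta>1" "\<theta>0 \<noteq> \<theta>2" "\<theta>1 \<noteq> \<theta>2"
  defines "u \<equiv> parab_pt a \<theta>1 - parab_pt a \<theta>0"
    and "v \<equiv> parab_pt a \<theta>2 - parab_pt a \<theta>0"
  shows "eventually (\<lambda>c. c > 0 \<and> timelike c u \<and> timelike c v
            \<and> cosh (pseudo_angle c u v) ^ 2 = cosh_sq_ratio c u v) at_top \<and>
         ((\<lambda>c. cosh (pseudo_angle c u v) ^ 2) \<longlongrightarrow> 1) at_top \<and>
         (\<lambda>c. (pseudo_angle c u v)^2) \<sim>[at_top]
           (\<lambda>c. a^2 / (4 * c^2) * (\<theta>1 - \<theta>2)^2)"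
proof -
  define p1 p2 where "p1 = a * (\<theta>0 + \<theta>1) / 2" and "p2 = a * (\<theta>0 + \<theta>2) / 2"
  define \<Delta> where "\<Delta> c = artanh (p1 / c) - artanh (p2 / c)" for c
  have u: "u = (\<theta>1 - \<theta>0) *\<^sub>R (1, p1)" and v: "v = (\<theta>2 - \<theta>0) *\<^sub>R (1, p2)"
    by (simp_all add: u_def v_def p1_def p2_def parab_pt_diff)
  have chords_nonzero: "\<theta>1 - \<theta>0 \<noteq> 0" "\<theta>2 - \<theta>0 \<noteq> 0"
    using assms by simp_all
  have ev: "\<forall>\<^sub>F c in at_top. c > 0 \<and> timelike c u \<and> timelike c v \<and>
      cosh_sq_ratio c u v = cosh (\<Delta> c)^2 \<and> pseudo_angle c u v = \<bar>\<Delta> c\<bar>"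
    using eventually_gt_at_top[of "\<bar>p1\<bar> + \<bar>p2\<bar>"]
  proof eventually_elim
    case (elim c)
    then have "\<bar>p1\<bar> < c" "\<bar>p2\<bar> < c"
      by linarith+
    then show ?case
      using chords_nonzero
      by (simp add: u v \<Delta>_def timelike_scaleR timelike_velocity cosh_sq_ratio_scaleR
          pseudo_angle_scaleR cosh_sq_ratio_velocity pseudo_angle_velocity del: scaleR_Pair)
  qed
  have "((\<lambda>c. cosh (\<Delta> c)^2) \<longlongrightarrow> cosh 0 ^ 2) at_top"
    unfolding \<Delta>_def by (intro tendsto_intros rapidity_diff_tendsto_0)
  moreover have "\<forall>\<^sub>F c in at_top. cosh (\<Delta> c)^2 = cosh (pseudo_angle c u v)^2"
    using ev by eventually_elim simp
  ultimately have cosh_sq_tendsto_1: "((\<lambda>c. cosh (pseudo_angle c u v) ^ 2) \<longlongrightarrow> 1) at_top"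
    by (simp add: tendsto_cong)
  have p_diff: "p1 - p2 = a * (\<theta>1 - \<theta>2) / 2"
    by (simp add: p1_def p2_def field_simps)
  then have "p1 \<noteq> p2"
    using assms(1,4) by auto
  have "(\<lambda>c. (pseudo_angle c u v)^2) \<sim>[at_top] (\<lambda>c. \<Delta> c ^ 2)"
    using ev by (intro asymp_equiv_refl_ev) (auto elim: eventually_mono)
  also have "(\<lambda>c. \<Delta> c ^ 2) \<sim>[at_top] (\<lambda>c. (p1 - p2)^2 / c^2)"
    unfolding \<Delta>_def using \<open>p1 \<noteq> p2\<close> by (rule rapidity_diff_sq_asymp_equiv)
  also have "(\<lambda>c. (p1 - p2)^2 / c^2) = (\<lambda>c. a^2 / (4 * c^2) * (\<theta>1 - \<theta>2)^2)"
    unfolding p_diff by (simp add: fun_eq_iff power_divide power_mult_distrib)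
  finally show ?thesis
    using ev cosh_sq_tendsto_1 by (auto elim: eventually_mono)
qed

end
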